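(* Every free-connex conjunctive query without self-joins has the head-domination property.
   Context: A conjunctive query (CQ) without self-joins is $Q(\mathbf{A}) :- R_1(\mathbb{A}_1), \ldots, R_m(\mathbb{A}_m)$ with pairwise distinct relation symbols, $\mathrm{attr}(R_i)=\mathbb{A}_i$, $\mathrm{attr}(Q)=\bigcup_i\mathbb{A}_i$, output attributes $\mathrm{head}(Q)=\mathbf{A}$, $\mathrm{head}(R_i)=\mathrm{head}(Q)\cap\mathrm{attr}(R_i)$. $Q$ is acyclic if there is a tree whose nodes are in one-to-one correspondence with the relations of $Q$ such that for every attribute $A\in\mathrm{attr}(Q)$, the nodes whose relations contain $A$ form a connected subtree. $Q$ is free-connex if $Q$ is acyclic and the CQ obtained by adding to $Q$ one further relation whose attribute set is exactly $\mathrm{head}(Q)$ is also acyclic. $G^\exists_Q$ has as vertices the relations with $\mathrm{attr}(R_i)\setminus\mathrm{head}(Q)\neq\emptyset$ and an edge between $R_i,R_j$ if $(\mathrm{attr}(R_i)\cap\mathrm{attr}(R_j))\setminus\mathrm{head}(Q)\neq\emptyset$. A relation $R_i$ of $Q$ is dominant for a set $E$ of relations if $\bigcup_{R_j\in E}\mathrm{head}(R_j)\subseteq\mathrm{head}(R_i)$. $Q$ has the head-domination property if for every connected component $E$ of $G^\exists_Q$ some relation of $Q$ is dominant for $E$. *)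

theory Defs
  imports Main
begin

text \<open>A self-join-free CQ with m relations R_0..R_(m-1) is represented by
  the attribute sets A i (i < m) and the head (output attributes) H.
  Since relation symbols are pairwise distinct, relations are identified with
  their indices.\<close>

definition connected_in :: "('v \<Rightarrow> 'v \<Rightarrow> bool) \<Rightarrow> 'v set \<Rightarrow> bool" where
  "connected_in adj S \<longleftrightarrow>
     (\<forall>x\<in>S. \<forall>y\<in>S. (\<lambda>u v. u \<in> S \<and> v \<in> S \<and> adj u v)\<^sup>*\<^sup>* x y)"

definition has_cycle :: "('v \<Rightarrow> 'v \<Rightarrow> bool) \<Rightarrow> 'v set \<Rightarrow> bool" where
  "has_cycle adj V \<longleftrightarrow>
     (\<exists>xs. length xs \<ge> 3 \<and> distinct xs \<and> set xs \<subseteq> V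
        \<and> (\<forall>i. Suc i < length xs \<longrightarrow> adj (xs ! i) (xs ! Suc i))
        \<and> adj (last xs) (hd xs))"

definition is_tree :: "'v set \<Rightarrow> ('v \<Rightarrow> 'v \<Rightarrow> bool) \<Rightarrow> bool" where
  "is_tree V T \<longleftrightarrow>
     (\<forall>u v. T u v \<longrightarrow> u \<in> V \<and> v \<in> V \<and> u \<noteq> v \<and> T v u)
     \<and> connected_in T V \<and> \<not> has_cycle T V"

definition acyclic_cq :: "nat \<Rightarrow> (nat \<Rightarrow> 'a set) \<Rightarrow> bool" where
  "acyclic_cq m A \<longleftrightarrow>
     (\<exists>T. is_tree {..<m} T \<and>
        (\<forall>x \<in> (\<Union>i<m. A i). connected_in T {i. i < m \<and> x \<in> A i}))"

definition free_connex :: "nat \<Rightarrow> (nat \<Rightarrow> 'a set) \<Rightarrow> 'a set \<Rightarrow> bool" where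
  "free_connex m A H \<longleftrightarrow>
     acyclic_cq m A \<and> acyclic_cq (Suc m) (A(m := H))"

definition exvert :: "nat \<Rightarrow> (nat \<Rightarrow> 'a set) \<Rightarrow> 'a set \<Rightarrow> nat set" where
  "exvert m A H = {i. i < m \<and> A i - H \<noteq> {}}"

definition exadj :: "(nat \<Rightarrow> 'a set) \<Rightarrow> 'a set \<Rightarrow> nat \<Rightarrow> nat \<Rightarrow> bool" where
  "exadj A H i j \<longleftrightarrow> i \<noteq> j \<and> (A i \<inter> A j) - H \<noteq> {}"

definition is_component :: "'v set \<Rightarrow> ('v \<Rightarrow> 'v \<Rightarrow> bool) \<Rightarrow> 'v set \<Rightarrow> bool" where
  "is_component V adj E \<longleftrightarrow>
     E \<noteq> {} \<and> E \<subseteq> V \<and> connected_in adj E \<and>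
     (\<forall>u v. u \<in> E \<and> v \<in> V \<and> adj u v \<longrightarrow> v \<in> E)"

definition dominant :: "(nat \<Rightarrow> 'a set) \<Rightarrow> 'a set \<Rightarrow> nat \<Rightarrow> nat set \<Rightarrow> bool" where
  "dominant A H k E \<longleftrightarrow> (\<Union>j\<in>E. H \<inter> A j) \<subseteq> H \<inter> A k"

definition head_domination :: "nat \<Rightarrow> (nat \<Rightarrow> 'a set) \<Rightarrow> 'a set \<Rightarrow> bool" where
  "head_domination m A H \<longleftrightarrow>
     (\<forall>E. is_component (exvert m A H) (exadj A H) E \<longrightarrow> (\<exists>k<m. dominant A H k E))"

end

(* Take a join tree T of Q extended by the head relation R_H (vertex m). A component E of
   G^exists_Q is connected in T: two relations of E sharing an existential attribute x are
   joined in T through the relations containing x, and all of these lie in E. Let k be the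
   vertex where a tree walk from R_H first enters E; every walk from E to R_H then passes
   through k. If a relation of E contains a head attribute h, the relations containing h form
   a connected subtree that also contains R_H, so it contains k; hence R_k is dominant for E. *)

theory Submission
  imports Defs "HOL-Library.Transitive_Closure_Table"
begin

definition induced :: "('v \<Rightarrow> 'v \<Rightarrow> bool) \<Rightarrow> 'v set \<Rightarrow> 'v \<Rightarrow> 'v \<Rightarrow> bool" where
  "induced adj S u v \<longleftrightarrow> u \<in> S \<and> v \<in> S \<and> adj u v"

lemma connected_in_iff_induced:
  "connected_in adj S \<longleftrightarrow> (\<forall>x\<in>S. \<forall>y\<in>S. (induced adj S)\<^sup>*\<^sup>* x y)"
  unfolding connected_in_def induced_def by simp

lemma induced_rtranclp_mono:
  assumes "(induced adj S)\<^sup>*\<^sup>* x y" and "S \<subseteq> S'"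
  shows "(induced adj S')\<^sup>*\<^sup>* x y"
  using assms(1)
  by (rule mono_rtranclp[rule_format, rotated]) (use assms(2) in \<open>auto simp: induced_def\<close>)

lemma connected_in_imp_induced_rtranclp:
  assumes "connected_in adj S" and "S \<subseteq> S'" and "x \<in> S" and "y \<in> S"
  shows "(induced adj S')\<^sup>*\<^sup>* x y"
proof -
  have "(induced adj S)\<^sup>*\<^sup>* x y"
    using assms(1,3,4) unfolding connected_in_iff_induced by blast
  then show ?thesis
    using assms(2) by (rule induced_rtranclp_mono)
qed

lemma connected_in_if_adjacent_joined:
  assumes "connected_in adj S"
    and "\<And>u v. u \<in> S \<Longrightarrow> v \<in> S \<Longrightarrow> adj u v \<Longrightarrow> (induced adj' S)\<^sup>*\<^sup>* u v"
  shows "connected_in adj' S"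
  unfolding connected_in_iff_induced
proof (intro ballI)
  fix x y assume "x \<in> S" "y \<in> S"
  with assms(1) have "(induced adj S)\<^sup>*\<^sup>* x y"
    unfolding connected_in_iff_induced by blast
  then show "(induced adj' S)\<^sup>*\<^sup>* x y"
  proof (induction rule: rtranclp_induct)
    case (step y z)
    then have "(induced adj' S)\<^sup>*\<^sup>* y z"
      using assms(2) by (simp add: induced_def)
    with step.IH show ?case by (rule rtranclp_trans)
  qed simp
qed

lemma rtranclp_first_entry:
  assumes "r\<^sup>*\<^sup>* x y" and "x \<notin> E" and "y \<in> E"
  obtains u k where "(induced r (- E))\<^sup>*\<^sup>* x u" and "r u k" and "u \<notin> E" and "k \<in> E"
  using assms
proof (induction arbitrary: thesis rule: converse_rtranclp_induct)
  case base
  then show ?case by simp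
next
  case (step x z)
  show ?case
  proof (cases "z \<in> E")
    case True
    with step.prems(1,2) step.hyps(1) show ?thesis by blast
  next
    case False
    then obtain u k where "(induced r (- E))\<^sup>*\<^sup>* z u" "r u k" "u \<notin> E" "k \<in> E"
      using step.IH step.prems(3) by blast
    moreover have "induced r (- E) x z"
      using False step.hyps(1) step.prems(2) by (simp add: induced_def)
    ultimately show ?thesis
      using step.prems(1) converse_rtranclp_into_rtranclp by metis
  qed
qed

lemma tree_edge_is_bridge:
  assumes tree: "is_tree V T" and "T k u"
  shows "\<not> (\<lambda>a b. T a b \<and> {a, b} \<noteq> {k, u})\<^sup>*\<^sup>* k u"
proof
  let ?T' = "\<lambda>a b. T a b \<and> {a, b} \<noteq> {k, u}"
  have T_edge: "a \<in> V \<and> b \<in> V \<and> a \<noteq> b \<and> T b a" if "T a b" for a b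
    using tree that unfolding is_tree_def by blast
  assume "?T'\<^sup>*\<^sup>* k u"
  then obtain xs0 where "rtrancl_path ?T' k xs0 u"
    unfolding rtranclp_eq_rtrancl_path by blast
  then obtain xs where path: "rtrancl_path ?T' k xs u" and distinct: "distinct (k # xs)"
    by (rule rtrancl_path_distinct)
  have "xs \<noteq> []"
    using path T_edge[OF \<open>T k u\<close>] by (auto elim: rtrancl_path.cases)
  have last: "last (k # xs) = u"
    using rtrancl_path_last[OF path \<open>xs \<noteq> []\<close>] \<open>xs \<noteq> []\<close> by simp
  have "xs \<noteq> [u]"
    using path by (auto elim!: rtrancl_path.cases)
  then have "length (k # xs) \<ge> 3"
    using \<open>xs \<noteq> []\<close> last by (cases xs rule: rev_cases) (auto simp: Suc_le_eq)
  moreover have "set (k # xs) \<subseteq> V"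
  proof
    fix z assume "z \<in> set (k # xs)"
    then consider "z = k" | a where "?T' a z"
      using rtrancl_path_Range[OF path] by fastforce
    then show "z \<in> V"
      by cases (use T_edge[OF \<open>T k u\<close>] T_edge in auto)
  qed
  moreover have "T ((k # xs) ! i) ((k # xs) ! Suc i)" if "Suc i < length (k # xs)" for i
    using rtrancl_path_nth[OF path, of i] that by simp
  moreover have "T (last (k # xs)) (hd (k # xs))"
    using last T_edge[OF \<open>T k u\<close>] by simp
  ultimately have "has_cycle T V"
    unfolding has_cycle_def using distinct by blast
  then show False
    using tree unfolding is_tree_def by blast
qed

lemma tree_connected_set_gateway:
  assumes tree: "is_tree V T" and conn: "connected_in T E"
    and "E \<noteq> {}" and "E \<subseteq> V" and "r \<in> V" and "r \<notin> E"
  obtains k where "k \<in> E" and "\<And>j. j \<in> E \<Longrightarrow> \<not> (induced T (- {k}))\<^sup>*\<^sup>* j r"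
proof -
  obtain e where "e \<in> E"
    using \<open>E \<noteq> {}\<close> by blast
  have "connected_in T V"
    using tree unfolding is_tree_def by blast
  then have "(induced T V)\<^sup>*\<^sup>* r e"
    using \<open>r \<in> V\<close> \<open>e \<in> E\<close> \<open>E \<subseteq> V\<close> unfolding connected_in_iff_induced by blast
  then have "T\<^sup>*\<^sup>* r e"
    by (rule mono_rtranclp[rule_format, rotated]) (simp add: induced_def)
  then obtain u k where r_u: "(induced T (- E))\<^sup>*\<^sup>* r u" and "T u k" and "u \<notin> E" and "k \<in> E"
    using \<open>r \<notin> E\<close> \<open>e \<in> E\<close> by (rule rtranclp_first_entry)
  have "T k u"
    using tree \<open>T u k\<close> unfolding is_tree_def by blast
  let ?T' = "\<lambda>a b. T a b \<and> {a, b} \<noteq> {k, u}"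
  have avoiding_edge: "?T'\<^sup>*\<^sup>* a b" if "(induced T S)\<^sup>*\<^sup>* a b" and "k \<notin> S \<or> u \<notin> S" for S a b
    using that(1)
  proof (rule mono_rtranclp[rule_format, rotated])
    fix c d assume "induced T S c d"
    with that(2) show "?T' c d"
      unfolding induced_def doubleton_eq_iff by blast
  qed
  (* A walk from E to r avoiding k closes, via k ~> j in E and r ~> u outside E,
     a walk from k to u that does not use the edge between them. *)
  show thesis
  proof (rule that[OF \<open>k \<in> E\<close> notI])
    fix j assume "j \<in> E" and j_r: "(induced T (- {k}))\<^sup>*\<^sup>* j r"
    have "(induced T E)\<^sup>*\<^sup>* k j"
      using conn \<open>k \<in> E\<close> \<open>j \<in> E\<close> unfolding connected_in_iff_induced by blast
    then have "?T'\<^sup>*\<^sup>* k j"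
      by (rule avoiding_edge) (use \<open>u \<notin> E\<close> in simp)
    moreover have "?T'\<^sup>*\<^sup>* j r"
      using j_r by (rule avoiding_edge) simp
    moreover have "?T'\<^sup>*\<^sup>* r u"
      using r_u by (rule avoiding_edge) (use \<open>k \<in> E\<close> in simp)
    ultimately have "?T'\<^sup>*\<^sup>* k u"
      by (meson rtranclp_trans)
    with tree_edge_is_bridge[OF tree \<open>T k u\<close>] show False ..
  qed
qed

lemma acyclic_cq_join_tree:
  assumes "acyclic_cq n A"
  obtains T where "is_tree {..<n} T" and "\<And>x. connected_in T {i. i < n \<and> x \<in> A i}"
proof -
  obtain T where tree: "is_tree {..<n} T"
    and occ: "\<forall>x \<in> (\<Union>i<n. A i). connected_in T {i. i < n \<and> x \<in> A i}"
    using assms unfolding acyclic_cq_def by blast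
  have "connected_in T {i. i < n \<and> x \<in> A i}" for x
  proof (cases "x \<in> (\<Union>i<n. A i)")
    case False
    then have "{i. i < n \<and> x \<in> A i} = {}"
      by blast
    then show ?thesis
      unfolding connected_in_def by (simp only:) simp
  qed (use occ in blast)
  with tree show thesis
    by (rule that)
qed

lemma component_contains_existential_occurrences:
  assumes comp: "is_component (exvert m A H) (exadj A H) E"
    and "j \<in> E" and "x \<in> A j" and "x \<notin> H"
  shows "{i. i < m \<and> x \<in> A i} \<subseteq> E"
proof
  fix i assume i: "i \<in> {i. i < m \<and> x \<in> A i}"
  then have "i \<in> exvert m A H"
    using \<open>x \<notin> H\<close> unfolding exvert_def by blast
  show "i \<in> E"
  proof (cases "i = j")
    case False
    then have "exadj A H j i"
      using i \<open>x \<in> A j\<close> \<open>x \<notin> H\<close> unfolding exadj_def by blast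
    with comp \<open>j \<in> E\<close> \<open>i \<in> exvert m A H\<close> show ?thesis
      unfolding is_component_def by blast
  qed (use \<open>j \<in> E\<close> in simp)
qed

lemma component_connected_in_join_tree:
  assumes comp: "is_component (exvert m A H) (exadj A H) E"
    and occ: "\<And>x. x \<notin> H \<Longrightarrow> connected_in T {i. i < m \<and> x \<in> A i}"
  shows "connected_in T E"
proof (rule connected_in_if_adjacent_joined)
  show "connected_in (exadj A H) E"
    using comp unfolding is_component_def by blast
next
  fix u v assume "u \<in> E" "v \<in> E" "exadj A H u v"
  then obtain x where "x \<in> A u" "x \<in> A v" "x \<notin> H"
    unfolding exadj_def by blast
  moreover have "u < m" "v < m"
    using comp \<open>u \<in> E\<close> \<open>v \<in> E\<close> unfolding is_component_def exvert_def by auto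
  ultimately show "(induced T E)\<^sup>*\<^sup>* u v"
    using connected_in_imp_induced_rtranclp[OF occ component_contains_existential_occurrences[OF comp \<open>u \<in> E\<close>]]
    by blast
qed

lemma occurrences_fun_upd_head:
  assumes "x \<notin> H"
  shows "{i. i < Suc m \<and> x \<in> (A(m := H)) i} = {i. i < m \<and> x \<in> A i}"
  using assms by (auto simp add: less_Suc_eq)

lemma gateway_is_dominant:
  assumes occ: "\<And>x. connected_in T {i. i < Suc m \<and> x \<in> (A(m := H)) i}"
    and "k < m" and "E \<subseteq> {..<m}"
    and gateway: "\<And>j. j \<in> E \<Longrightarrow> \<not> (induced T (- {k}))\<^sup>*\<^sup>* j m"
  shows "dominant A H k E"
  unfolding dominant_def
proof (intro subsetI, elim UN_E IntE)
  fix h j assume "j \<in> E" "h \<in> H" "h \<in> A j"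
  let ?S = "{i. i < Suc m \<and> h \<in> (A(m := H)) i}"
  have "j \<in> ?S" "m \<in> ?S"
    using \<open>j \<in> E\<close> \<open>h \<in> H\<close> \<open>h \<in> A j\<close> \<open>E \<subseteq> {..<m}\<close> by auto
  have "k \<in> ?S"
  proof (rule ccontr)
    assume "k \<notin> ?S"
    then have "?S \<subseteq> - {k}"
      by blast
    then have "(induced T (- {k}))\<^sup>*\<^sup>* j m"
      using connected_in_imp_induced_rtranclp[OF occ] \<open>j \<in> ?S\<close> \<open>m \<in> ?S\<close> by blast
    with gateway \<open>j \<in> E\<close> show False by blast
  qed
  with \<open>k < m\<close> \<open>h \<in> H\<close> show "h \<in> H \<inter> A k"
    by simp
qed

theorem lemma19:
  fixes m :: nat and A :: "nat \<Rightarrow> 'a set" and H :: "'a set"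
  assumes "\<And>i. i < m \<Longrightarrow> finite (A i)"
    and "H \<subseteq> (\<Union>i<m. A i)"
    and "free_connex m A H"
  shows "head_domination m A H"
  unfolding head_domination_def
proof (intro allI impI)
  fix E assume comp: "is_component (exvert m A H) (exadj A H) E"
  have "acyclic_cq (Suc m) (A(m := H))"
    using assms(3) unfolding free_connex_def by blast
  then obtain T where tree: "is_tree {..<Suc m} T"
    and occ: "\<And>x. connected_in T {i. i < Suc m \<and> x \<in> (A(m := H)) i}"
    by (rule acyclic_cq_join_tree) blast
  have "E \<noteq> {}" and E_below: "E \<subseteq> {..<m}"
    using comp unfolding is_component_def exvert_def by auto
  have "connected_in T E"
  proof (rule component_connected_in_join_tree[OF comp])
    fix x assume "x \<notin> H"
    show "connected_in T {i. i < m \<and> x \<in> A i}"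
      using occ[of x] unfolding occurrences_fun_upd_head[OF \<open>x \<notin> H\<close>] .
  qed
  moreover have "E \<subseteq> {..<Suc m}" "m \<in> {..<Suc m}" "m \<notin> E"
    using E_below by auto
  ultimately obtain k where "k \<in> E" and "\<And>j. j \<in> E \<Longrightarrow> \<not> (induced T (- {k}))\<^sup>*\<^sup>* j m"
    using tree \<open>E \<noteq> {}\<close> by (metis tree_connected_set_gateway)
  moreover have "k < m"
    using \<open>k \<in> E\<close> E_below by blast
  ultimately show "\<exists>k<m. dominant A H k E"
    using gateway_is_dominant[OF occ _ E_below] by blast
qed

end
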